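(* Let $r$ be a positive integer and let $p\in Hom_+(n,n)$ be H-stable and $r$-regular, i.e. $p(e+te_i)=\left(\frac{r+t}{r}\right)^r$ for all real $t$ and all $1\le i\le n$. For $1\le j\le n$ let $q_{(j)}\in Hom_+(n-1,n-1)$ be the polynomial in the variables $(x_k:k\ne j)$ given by $q_{(j)}=\frac{\partial}{\partial x_j}p(x_1,\dots,x_n)\big|_{x_j=0}$. Then for every $1\le j\le n$ the polynomial $G(r)^{-1}q_{(j)}$ is doubly-stochastic.
   Context: $Hom_+(m,d)$ is the set of homogeneous polynomials of degree $d$ in $m$ variables with non-negative real coefficients. $p\in Hom_+(n,n)$ is H-stable if $p(z_1,\dots,z_n)\ne 0$ whenever $\mathrm{Re}(z_i)>0$ for all $i$. $e=(1,\dots,1)$ and $e_i$ is the $i$-th standard basis vector. A polynomial $q\in Hom_+(m,m)$ is doubly-stochastic if $\frac{\partial q}{\partial x_k}(1,\dots,1)=1$ for all $k$ (equivalently, $q(e)=1$ and $Cap(q)\ge 1$, where $Cap(q)=\inf_{x_i>0}\frac{q(x_1,\dots,x_m)}{\prod_i x_i}$). $G(x)=\left(\frac{x-1}{x}\right)^{x-1}$ for $x\ge1$. *)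

theory Defs
  imports Complex_Main
begin

text \<open>Multivariate polynomials are represented by their coefficient function on
monomials. A monomial is an exponent vector alpha :: nat => nat; a polynomial in the
variables x_i (i in a finite index set V) that is homogeneous of degree d has all its
coefficients supported on the monomials in monoms V d.\<close>

definition monoms :: "nat set \<Rightarrow> nat \<Rightarrow> (nat \<Rightarrow> nat) set" where
  "monoms V d = {\<alpha>. (\<forall>i. i \<notin> V \<longrightarrow> \<alpha> i = 0) \<and> sum \<alpha> V = d}"

definition hom_plus :: "nat set \<Rightarrow> nat \<Rightarrow> ((nat \<Rightarrow> nat) \<Rightarrow> real) \<Rightarrow> bool" where
  "hom_plus V d c \<longleftrightarrow> (\<forall>\<alpha>. 0 \<le> c \<alpha>) \<and> (\<forall>\<alpha>. \<alpha> \<notin> monoms V d \<longrightarrow> c \<alpha> = 0)"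

definition peval :: "nat set \<Rightarrow> nat \<Rightarrow> ((nat \<Rightarrow> nat) \<Rightarrow> real) \<Rightarrow> (nat \<Rightarrow> 'a::{real_algebra_1,comm_ring_1}) \<Rightarrow> 'a" where
  "peval V d c z = (\<Sum>\<alpha>\<in>monoms V d. of_real (c \<alpha>) * (\<Prod>i\<in>V. z i ^ \<alpha> i))"

text \<open>Partial derivative with respect to x_k (coefficientwise); it lowers the degree by one.\<close>
definition pdiff :: "nat \<Rightarrow> ((nat \<Rightarrow> nat) \<Rightarrow> real) \<Rightarrow> ((nat \<Rightarrow> nat) \<Rightarrow> real)" where
  "pdiff k c = (\<lambda>\<alpha>. real (\<alpha> k + 1) * c (\<alpha>(k := \<alpha> k + 1)))"

definition subst_zero :: "nat \<Rightarrow> ((nat \<Rightarrow> nat) \<Rightarrow> real) \<Rightarrow> ((nat \<Rightarrow> nat) \<Rightarrow> real)" where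
  "subst_zero k c = (\<lambda>\<alpha>. if \<alpha> k = 0 then c \<alpha> else 0)"

text \<open>H-stability of p in Hom_+(n,n), variables x_0, ..., x_(n-1).\<close>
definition H_stable :: "nat \<Rightarrow> ((nat \<Rightarrow> nat) \<Rightarrow> real) \<Rightarrow> bool" where
  "H_stable n p \<longleftrightarrow> (\<forall>z :: nat \<Rightarrow> complex. (\<forall>i<n. 0 < Re (z i)) \<longrightarrow> peval {..<n} n p z \<noteq> 0)"

definition doubly_stochastic :: "nat set \<Rightarrow> ((nat \<Rightarrow> nat) \<Rightarrow> real) \<Rightarrow> bool" where
  "doubly_stochastic V q \<longleftrightarrow> hom_plus V (card V) q \<and>
     (\<forall>k\<in>V. peval V (card V - 1) (pdiff k q) (\<lambda>_. 1 :: real) = 1)"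

text \<open>G(x) = ((x-1)/x)^(x-1) for x >= 1, with the convention 0^0 = 1 at x = 1.\<close>
definition G :: "real \<Rightarrow> real" where
  "G x = (if x = 1 then 1 else ((x - 1) / x) powr (x - 1))"

end

theory Submission
  imports Defs "HOL-Analysis.Analysis" "HOL-Computational_Algebra.Fundamental_Theorem_Algebra"
begin

text \<open>
  Regularity says that the restriction of \<open>p\<close> to every coordinate line through \<open>e\<close> is
  \<open>((r - 1 + s) / r) ^ r\<close>. Hence the coefficients of \<open>p\<close> sum to \<open>1\<close> and every partial derivative
  of \<open>p\<close> at \<open>e\<close> is \<open>1\<close>, so \<open>Cap(p) \<ge> 1\<close> by Jensen's inequality.
  Fix \<open>j\<close> and positive values \<open>y\<close> of the other variables. The univariate polynomial
  \<open>P(s) = p(y, x\<^sub>j = s)\<close> has degree at most \<open>r\<close>, nonnegative coefficients and, by homogeneity and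
  H-stability, only real nonpositive roots; its linear coefficient is \<open>q\<^sub>j(y)\<close>. AM-GM over the roots gives
  \<open>P(s) \<le> P(0) (1 + s P'(0) / (r P(0))) ^ r\<close>, and comparing with \<open>P(s) \<ge> s \<Prod>y\<close> at the optimal \<open>s\<close>
  yields \<open>q\<^sub>j(y) \<ge> G(r) \<Prod>y\<close>. Since \<open>q\<^sub>j(e)\<close> is the linear coefficient of \<open>((r - 1 + s) / r) ^ r\<close>,
  namely \<open>G(r)\<close>, the function \<open>q\<^sub>j(x) - G(r) \<Prod>x\<close> attains its minimum \<open>0\<close> at \<open>e\<close>, so its gradient
  vanishes there.
\<close>

section \<open>Monomials and partial derivatives\<close>

lemma finite_monoms:
  assumes "finite V"
  shows "finite (monoms V d)"
proof -
  have "inj_on (\<lambda>\<alpha>. restrict \<alpha> V) (monoms V d)"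
  proof (rule inj_onI)
    fix \<alpha> \<beta> assume \<alpha>\<beta>: "\<alpha> \<in> monoms V d" "\<beta> \<in> monoms V d" "restrict \<alpha> V = restrict \<beta> V"
    show "\<alpha> = \<beta>"
    proof
      fix i show "\<alpha> i = \<beta> i"
        using \<alpha>\<beta> unfolding monoms_def by (cases "i \<in> V") (auto dest: fun_cong[of _ _ i])
    qed
  qed
  moreover have "(\<lambda>\<alpha>. restrict \<alpha> V) ` monoms V d \<subseteq> (\<Pi>\<^sub>E i\<in>V. {0..d})"
    using assms member_le_sum[of _ V] by (fastforce simp: monoms_def)
  moreover have "finite (\<Pi>\<^sub>E i\<in>V. {0..d})"
    using assms by (intro finite_PiE) auto
  ultimately show ?thesis
    by (meson finite_imageD finite_subset)
qed

lemma sum_fun_upd: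
  fixes f :: "'a \<Rightarrow> 'b::comm_monoid_add"
  assumes "finite V" "k \<in> V"
  shows "sum (f(k := v)) V + f k = sum f V + v"
proof -
  have "sum (f(k := v)) (V - {k}) = sum f (V - {k})"
    by (rule sum.cong) auto
  with assms show ?thesis
    by (simp add: sum.remove[of V k] ac_simps)
qed

lemma monoms_fun_upd_Suc:
  assumes "finite V" "k \<in> V"
  shows "\<gamma>(k := Suc (\<gamma> k)) \<in> monoms V (Suc d) \<longleftrightarrow> \<gamma> \<in> monoms V d"
proof -
  have "sum (\<gamma>(k := Suc (\<gamma> k))) V = Suc (sum \<gamma> V)"
    using sum_fun_upd[OF assms, of \<gamma> "Suc (\<gamma> k)"] by simp
  moreover have "(\<forall>i. i \<notin> V \<longrightarrow> (\<gamma>(k := Suc (\<gamma> k))) i = 0) \<longleftrightarrow> (\<forall>i. i \<notin> V \<longrightarrow> \<gamma> i = 0)"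
    using assms(2) by auto
  ultimately show ?thesis
    unfolding monoms_def by simp
qed

lemma monoms_Diff_iff:
  assumes "finite N" "j \<in> N"
  shows "\<beta> \<in> monoms (N - {j}) d \<longleftrightarrow> \<beta> j = 0 \<and> \<beta> \<in> monoms N d"
  using assms by (auto simp: monoms_def sum.remove[of N j])

lemma peval_scale:
  "peval V d c (\<lambda>i. l * z i) = l ^ d * peval V d c z"
proof -
  have "(\<Prod>i\<in>V. (l * z i) ^ \<alpha> i) = l ^ d * (\<Prod>i\<in>V. z i ^ \<alpha> i)" if "\<alpha> \<in> monoms V d" for \<alpha>
    using that by (simp add: monoms_def power_mult_distrib prod.distrib power_sum[symmetric])
  then show ?thesis
    unfolding peval_def by (simp add: sum_distrib_left mult_ac)
qed

lemma peval_pdiff_ones: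
  assumes "finite V" "k \<in> V"
  shows "peval V d (pdiff k c) (\<lambda>_. 1::real) = (\<Sum>\<beta>\<in>monoms V (Suc d). c \<beta> * \<beta> k)"
proof -
  have dec: "\<beta>(k := \<beta> k - 1) \<in> monoms V d" if "\<beta> \<in> monoms V (Suc d)" "0 < \<beta> k" for \<beta>
    using that monoms_fun_upd_Suc[OF assms, of "\<beta>(k := \<beta> k - 1)" d] by simp
  have "peval V d (pdiff k c) (\<lambda>_. 1::real)
      = (\<Sum>\<gamma>\<in>monoms V d. real (Suc (\<gamma> k)) * c (\<gamma>(k := Suc (\<gamma> k))))"
    by (simp add: peval_def pdiff_def)
  also have "\<dots> = (\<Sum>\<beta>\<in>{\<beta>\<in>monoms V (Suc d). 0 < \<beta> k}. c \<beta> * \<beta> k)"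
    by (rule sum.reindex_bij_witness[where i = "\<lambda>\<beta>. \<beta>(k := \<beta> k - 1)" and j = "\<lambda>\<gamma>. \<gamma>(k := Suc (\<gamma> k))"])
      (use dec monoms_fun_upd_Suc[OF assms] in auto)
  also have "\<dots> = (\<Sum>\<beta>\<in>monoms V (Suc d). c \<beta> * \<beta> k)"
    by (rule sum.mono_neutral_left) (auto simp: finite_monoms assms)
  finally show ?thesis .
qed

lemma hom_plus_subst_zero_pdiff:
  assumes "finite N" "j \<in> N" "hom_plus N (Suc d) p"
  shows "hom_plus (N - {j}) d (subst_zero j (pdiff j p))"
  unfolding hom_plus_def
proof (intro conjI allI impI)
  fix \<alpha>
  show "0 \<le> subst_zero j (pdiff j p) \<alpha>"
    using assms(3) by (simp add: hom_plus_def subst_zero_def pdiff_def)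
  assume \<alpha>: "\<alpha> \<notin> monoms (N - {j}) d"
  show "subst_zero j (pdiff j p) \<alpha> = 0"
  proof (cases "\<alpha> j = 0")
    case True
    then have "\<alpha>(j := Suc (\<alpha> j)) \<notin> monoms N (Suc d)"
      using \<alpha> monoms_fun_upd_Suc[OF assms(1,2), of \<alpha> d] monoms_Diff_iff[OF assms(1,2)] by simp
    then show ?thesis
      using True assms(3) by (simp add: hom_plus_def subst_zero_def pdiff_def)
  qed (simp add: subst_zero_def)
qed

section \<open>Restriction to a coordinate line\<close>

definition slice_poly :: "nat set \<Rightarrow> nat \<Rightarrow> ((nat \<Rightarrow> nat) \<Rightarrow> real) \<Rightarrow> nat \<Rightarrow>
    (nat \<Rightarrow> 'a::{real_algebra_1,comm_ring_1}) \<Rightarrow> 'a poly" where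
  "slice_poly V d c j y = (\<Sum>\<alpha>\<in>monoms V d. monom (of_real (c \<alpha>) * (\<Prod>i\<in>V - {j}. y i ^ \<alpha> i)) (\<alpha> j))"

lemma poly_slice_poly:
  assumes "finite V" "j \<in> V"
  shows "poly (slice_poly V d c j y) s = peval V d c (y(j := s))"
proof -
  have "(\<Prod>i\<in>V. (y(j := s)) i ^ \<alpha> i) = s ^ \<alpha> j * (\<Prod>i\<in>V - {j}. y i ^ \<alpha> i)" for \<alpha>
    using assms by (simp add: prod.remove[of V j])
  then show ?thesis
    unfolding slice_poly_def peval_def by (simp add: poly_sum poly_monom mult_ac)
qed

lemma coeff_slice_poly:
  "coeff (slice_poly V d c j y) m =
     (\<Sum>\<alpha>\<in>monoms V d. if \<alpha> j = m then of_real (c \<alpha>) * (\<Prod>i\<in>V - {j}. y i ^ \<alpha> i) else 0)"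
  unfolding slice_poly_def by (simp add: coeff_sum)

lemma map_poly_of_real_slice_poly:
  "map_poly complex_of_real (slice_poly V d c j y) = slice_poly V d c j (\<lambda>i. complex_of_real (y i))"
  by (rule poly_eqI) (simp add: coeff_map_poly coeff_slice_poly if_distrib cong: if_cong)

lemma coeff_slice_poly_nonneg:
  assumes "\<forall>\<alpha>. 0 \<le> c \<alpha>" "\<forall>i\<in>V - {j}. 0 \<le> y i"
  shows "0 \<le> coeff (slice_poly V d c j (y :: nat \<Rightarrow> real)) m"
  unfolding coeff_slice_poly using assms by (auto intro!: sum_nonneg mult_nonneg_nonneg prod_nonneg zero_le_power)

lemma coeff_slice_poly_eq_0_iff:
  assumes "finite V" "\<forall>\<alpha>. 0 \<le> c \<alpha>" "\<forall>i\<in>V - {j}. 0 < y i"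
  shows "coeff (slice_poly V d c j (y :: nat \<Rightarrow> real)) m = 0 \<longleftrightarrow> (\<forall>\<alpha>\<in>monoms V d. \<alpha> j = m \<longrightarrow> c \<alpha> = 0)"
proof -
  have pos: "0 < (\<Prod>i\<in>V - {j}. y i ^ \<alpha> i)" for \<alpha>
    using assms(3) by (intro prod_pos) auto
  have "coeff (slice_poly V d c j y) m = 0 \<longleftrightarrow>
      (\<forall>\<alpha>\<in>monoms V d. (if \<alpha> j = m then c \<alpha> * (\<Prod>i\<in>V - {j}. y i ^ \<alpha> i) else 0) = 0)"
    unfolding coeff_slice_poly of_real_eq_id id_apply using assms(1,2) pos
    by (intro sum_nonneg_eq_0_iff) (auto simp: finite_monoms less_imp_le)
  then show ?thesis
    using pos by (auto simp: less_imp_neq[symmetric])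
qed

lemma peval_subst_zero_pdiff:
  assumes "finite N" "j \<in> N"
  shows "peval (N - {j}) d (subst_zero j (pdiff j p)) y = coeff (slice_poly N (Suc d) p j (y :: nat \<Rightarrow> real)) 1"
proof -
  define V where "V = N - {j}"
  have "coeff (slice_poly N (Suc d) p j y) 1 = (\<Sum>\<alpha>\<in>{\<alpha>\<in>monoms N (Suc d). \<alpha> j = 1}. p \<alpha> * (\<Prod>i\<in>V. y i ^ \<alpha> i))"
    by (simp add: coeff_slice_poly sum.inter_filter finite_monoms assms V_def cong: if_cong)
  moreover have "peval V d (subst_zero j (pdiff j p)) y = \<dots>"
    unfolding peval_def
  proof (rule sum.reindex_bij_witness[where i = "\<lambda>\<alpha>. \<alpha>(j := 0)" and j = "\<lambda>\<beta>. \<beta>(j := 1)"])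
    fix \<beta> assume "\<beta> \<in> monoms V d"
    then have \<beta>: "\<beta> j = 0" "\<beta> \<in> monoms N d"
      using monoms_Diff_iff[OF assms] by (auto simp: V_def)
    then show "\<beta>(j := 1, j := 0) = \<beta>" "\<beta>(j := 1) \<in> {\<alpha> \<in> monoms N (Suc d). \<alpha> j = 1}"
      using monoms_fun_upd_Suc[OF assms, of \<beta> d] by auto
    have "(\<Prod>i\<in>V. y i ^ (\<beta>(j := 1)) i) = (\<Prod>i\<in>V. y i ^ \<beta> i)"
      by (rule prod.cong) (auto simp: V_def)
    then show "p (\<beta>(j := 1)) * (\<Prod>i\<in>V. y i ^ (\<beta>(j := 1)) i)
        = of_real (subst_zero j (pdiff j p) \<beta>) * (\<Prod>i\<in>V. y i ^ \<beta> i)"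
      using \<beta> by (simp add: subst_zero_def pdiff_def)
  next
    fix \<alpha> assume \<alpha>: "\<alpha> \<in> {\<alpha> \<in> monoms N (Suc d). \<alpha> j = 1}"
    then show "\<alpha>(j := 0, j := 1) = \<alpha>"
      by auto
    have "(\<alpha>(j := 0))(j := Suc ((\<alpha>(j := 0)) j)) = \<alpha>"
      using \<alpha> by auto
    then show "\<alpha>(j := 0) \<in> monoms V d"
      using \<alpha> monoms_fun_upd_Suc[OF assms, of "\<alpha>(j := 0)" d] monoms_Diff_iff[OF assms]
      by (simp add: V_def)
  qed
  ultimately show ?thesis
    by (simp add: V_def)
qed

lemma poly_slice_poly_ones:
  assumes "finite V" "i \<in> V"
  shows "poly (slice_poly V d c i (\<lambda>_. 1::real)) s = (\<Sum>\<alpha>\<in>monoms V d. c \<alpha> * s ^ \<alpha> i)"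
proof -
  have "(\<Prod>k\<in>V. ((\<lambda>_. 1::real)(i := s)) k ^ \<alpha> k) = s ^ \<alpha> i" for \<alpha>
    using assms by (simp add: prod.remove[of V i])
  then show ?thesis
    using assms by (simp add: poly_slice_poly peval_def)
qed

lemma poly_pderiv_slice_poly_ones:
  assumes "finite V" "i \<in> V"
  shows "poly (pderiv (slice_poly V d c i (\<lambda>_. 1::real))) 1 = (\<Sum>\<alpha>\<in>monoms V d. c \<alpha> * \<alpha> i)"
proof -
  have "((\<lambda>s. \<Sum>\<alpha>\<in>monoms V d. c \<alpha> * s ^ \<alpha> i) has_real_derivative
      (\<Sum>\<alpha>\<in>monoms V d. c \<alpha> * (real (\<alpha> i) * 1 ^ (\<alpha> i - 1)))) (at 1)"
    by (intro derivative_eq_intros) auto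
  moreover have "poly (slice_poly V d c i (\<lambda>_. 1)) = (\<lambda>s. \<Sum>\<alpha>\<in>monoms V d. c \<alpha> * s ^ \<alpha> i)"
    using poly_slice_poly_ones[OF assms] by blast
  ultimately have "(poly (slice_poly V d c i (\<lambda>_. 1)) has_real_derivative (\<Sum>\<alpha>\<in>monoms V d. c \<alpha> * \<alpha> i)) (at 1)"
    by simp
  then show ?thesis
    using DERIV_unique poly_DERIV by blast
qed

section \<open>Capacity\<close>

lemma prod_le_peval_if_stochastic:
  assumes "finite V" "hom_plus V d p"
    and sum_p: "(\<Sum>\<alpha>\<in>monoms V d. p \<alpha>) = 1"
    and sum_weighted: "\<forall>i\<in>V. (\<Sum>\<alpha>\<in>monoms V d. p \<alpha> * \<alpha> i) = 1"
    and x: "\<forall>i\<in>V. 0 < (x i :: real)"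
  shows "(\<Prod>i\<in>V. x i) \<le> peval V d p x"
proof -
  define M where "M = monoms V d"
  define Y where "Y \<alpha> = (\<Sum>i\<in>V. real (\<alpha> i) * ln (x i))" for \<alpha>
  have M: "finite M" "M \<noteq> {}"
    using sum_p by (auto simp: M_def finite_monoms assms(1))
  have "exp (\<Sum>\<alpha>\<in>M. p \<alpha> *\<^sub>R Y \<alpha>) \<le> (\<Sum>\<alpha>\<in>M. p \<alpha> * exp (Y \<alpha>))"
    by (rule convex_on_sum[OF M exp_convex]) (use assms(2) sum_p in \<open>auto simp: M_def hom_plus_def\<close>)
  moreover have "(\<Sum>\<alpha>\<in>M. p \<alpha> *\<^sub>R Y \<alpha>) = (\<Sum>i\<in>V. (\<Sum>\<alpha>\<in>M. p \<alpha> * \<alpha> i) * ln (x i))"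
    by (simp add: Y_def sum_distrib_left sum_distrib_right mult_ac sum.swap[of _ M])
  moreover have "exp (Y \<alpha>) = (\<Prod>i\<in>V. x i ^ \<alpha> i)" for \<alpha>
  proof -
    have "exp (Y \<alpha>) = (\<Prod>i\<in>V. exp (real (\<alpha> i) * ln (x i)))"
      using assms(1) by (simp add: Y_def exp_sum)
    also have "\<dots> = (\<Prod>i\<in>V. x i ^ \<alpha> i)"
      using x by (intro prod.cong) (simp_all add: exp_of_nat_mult)
    finally show ?thesis .
  qed
  moreover have "exp (\<Sum>i\<in>V. ln (x i)) = (\<Prod>i\<in>V. x i)"
    using x assms(1) by (simp add: exp_sum)
  ultimately show ?thesis
    using sum_weighted by (simp add: peval_def M_def)
qed

lemma weighted_coeff_sum_eq_if_min_at_ones: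
  fixes c :: real
  assumes V: "finite V" "k \<in> V"
    and ge: "\<forall>x. (\<forall>i\<in>V. 0 < x i) \<longrightarrow> c * (\<Prod>i\<in>V. x i) \<le> peval V d q x"
    and eq: "peval V d q (\<lambda>_. 1) = c"
  shows "(\<Sum>\<beta>\<in>monoms V d. q \<beta> * \<beta> k) = c"
proof -
  define P where "P = slice_poly V d q k (\<lambda>_. 1::real)"
  have P: "poly P s = peval V d q ((\<lambda>_. 1)(k := s))" for s
    using V by (simp add: P_def poly_slice_poly)
  have lower: "c * s \<le> poly P s" if "0 < s" for s
  proof -
    have "(\<Prod>i\<in>V. ((\<lambda>_. 1::real)(k := s)) i) = s"
      using V by (simp add: prod.remove[of V k])
    then show ?thesis
      using ge[rule_format, of "(\<lambda>_. 1)(k := s)"] that by (auto simp: P)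
  qed
  have "(\<lambda>_. 1::real)(k := 1) = (\<lambda>_. 1)"
    by auto
  then have P1: "poly P 1 = c"
    using eq by (simp add: P)
  have "poly P 1 - c * 1 \<le> poly P s - c * s" if "\<bar>1 - s\<bar> < 1" for s
    using lower[of s] P1 that by linarith
  then have "\<forall>s. \<bar>1 - s\<bar> < 1 \<longrightarrow> (\<lambda>s. poly P s - c * s) 1 \<le> (\<lambda>s. poly P s - c * s) s"
    by simp
  moreover have "((\<lambda>s. poly P s - c * s) has_real_derivative poly (pderiv P) 1 - c * 1) (at 1)"
    by (intro DERIV_diff poly_DERIV DERIV_cmult DERIV_ident)
  ultimately have "poly (pderiv P) 1 - c * 1 = 0"
    using DERIV_local_min zero_less_one by blast
  then show ?thesis
    using poly_pderiv_slice_poly_ones[OF V] by (simp add: P_def)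
qed

lemma doubly_stochastic_div_if_capacity_attained:
  fixes c :: real
  assumes V: "finite V" and hom: "hom_plus V (card V) q" and c: "0 < c"
    and ge: "\<forall>x. (\<forall>i\<in>V. 0 < x i) \<longrightarrow> c * (\<Prod>i\<in>V. x i) \<le> peval V (card V) q x"
    and eq: "peval V (card V) q (\<lambda>_. 1) = c"
  shows "doubly_stochastic V (\<lambda>\<alpha>. q \<alpha> / c)"
  unfolding doubly_stochastic_def
proof (intro conjI ballI)
  show "hom_plus V (card V) (\<lambda>\<alpha>. q \<alpha> / c)"
    using hom c by (simp add: hom_plus_def)
  fix k
  assume k: "k \<in> V"
  then have "card V \<noteq> 0"
    using V by auto
  then have card: "Suc (card V - 1) = card V"
    by simp
  have "peval V (card V - 1) (pdiff k (\<lambda>\<alpha>. q \<alpha> / c)) (\<lambda>_. 1::real) = (\<Sum>\<beta>\<in>monoms V (card V). q \<beta> / c * \<beta> k)"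
    using peval_pdiff_ones[OF V k, of "card V - 1"] by (simp only: card)
  also have "\<dots> = (\<Sum>\<beta>\<in>monoms V (card V). q \<beta> * \<beta> k) / c"
    by (simp add: sum_divide_distrib)
  also have "\<dots> = 1"
    using weighted_coeff_sum_eq_if_min_at_ones[OF V k ge eq] c by simp
  finally show "peval V (card V - 1) (pdiff k (\<lambda>\<alpha>. q \<alpha> / c)) (\<lambda>_. 1::real) = 1" .
qed

section \<open>Real-rooted univariate polynomials\<close>

lemma weighted_am_gm_one_plus:
  fixes x y :: real
  assumes "0 \<le> x" "0 \<le> y"
  shows "(1 + x) * (1 + y) ^ k \<le> (1 + (x + k * y) / (real k + 1)) ^ (k + 1)"
proof -
  define A B where "A = 1 + x" and "B = 1 + y"
  define u v :: real where "u = 1 / (real k + 1)" and "v = k / (real k + 1)"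
  have A: "0 < A" and B: "0 < B" and uv: "0 \<le> u" "0 \<le> v" "u + v = 1"
    using assms by (auto simp: A_def B_def u_def v_def field_simps)
  have mean: "u * A + v * B = 1 + (x + k * y) / (real k + 1)"
    by (simp add: A_def B_def u_def v_def divide_simps) (simp add: algebra_simps)
  then have mean_pos: "0 < u * A + v * B"
    using assms by (simp add: add_pos_nonneg)
  have "ln (A * B ^ k) = (real k + 1) * (u * ln A + v * ln B)"
    using A B by (simp add: u_def v_def distrib_left ln_mult ln_realpow)
  also have "\<dots> \<le> (real k + 1) * ln (u * A + v * B)"
    using ln_concave A B uv unfolding concave_on_iff by (intro mult_left_mono) auto
  also have "\<dots> = ln ((u * A + v * B) ^ (k + 1))"
    using mean_pos ln_realpow[of "u * A + v * B" "k + 1"] by simp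
  finally have "ln (A * B ^ k) \<le> ln ((u * A + v * B) ^ (k + 1))" .
  then have "A * B ^ k \<le> (u * A + v * B) ^ (k + 1)"
    using A B mean_pos by simp
  then show ?thesis
    using mean by (simp add: A_def B_def ac_simps)
qed

lemma map_poly_of_real_mult:
  "map_poly complex_of_real (p * q) = map_poly complex_of_real p * map_poly complex_of_real q"
  by (rule poly_eqI) (simp add: coeff_map_poly coeff_mult)

lemma poly_map_poly_of_real: "poly (map_poly complex_of_real p) (of_real x) = of_real (poly p x)"
  by (induction p) (auto simp: map_poly_pCons)

lemma real_rooted_poly_le_power:
  fixes P :: "real poly"
  assumes "\<forall>z. poly (map_poly complex_of_real P) z = 0 \<longrightarrow> (\<exists>c>0. z = - of_real c)"
    and "0 < coeff P 0"
  shows "0 \<le> coeff P 1 \<and> (\<forall>m s. degree P \<le> m \<longrightarrow> 0 \<le> s \<longrightarrow>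
           poly P s \<le> coeff P 0 * (1 + s * coeff P 1 / (coeff P 0 * m)) ^ m)"
  using assms
proof (induction "degree P" arbitrary: P)
  case 0
  then obtain a where "P = [:a:]"
    by (metis degree_eq_zeroE)
  then show ?case
    by simp
next
  case (Suc d P)
  have "degree (map_poly complex_of_real P) = Suc d"
    using Suc.hyps(2) by (simp add: degree_map_poly)
  then obtain z where "poly (map_poly complex_of_real P) z = 0"
    using fundamental_theorem_of_algebra constant_degree by (metis nat.distinct(1))
  then obtain c where c: "0 < c" "poly (map_poly complex_of_real P) (- of_real c) = 0"
    using Suc.prems(1) by blast
  then have "poly P (- c) = 0"
    using poly_map_poly_of_real[of P "- c"] by simp
  then have "[:c, 1:] dvd P"
    using poly_eq_0_iff_dvd[of P "- c"] by simp
  then obtain Q where P: "P = [:c, 1:] * Q"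
    by (rule dvdE)
  have "Q \<noteq> 0"
    using P Suc.hyps(2) by auto
  then have "degree P = degree [:c, 1:] + degree Q"
    unfolding P by (intro degree_mult_eq) auto
  then have deg_Q: "degree Q = d"
    using Suc.hyps(2) by simp
  have roots_Q: "\<forall>z. poly (map_poly complex_of_real Q) z = 0 \<longrightarrow> (\<exists>c>0. z = - of_real c)"
    using Suc.prems(1) unfolding P by (metis map_poly_of_real_mult poly_mult mult_zero_right)
  define a b where "a = coeff Q 0" and "b = coeff Q 1"
  have coeff_P: "coeff P 0 = c * a" "coeff P 1 = a + c * b"
    by (simp_all add: P a_def b_def)
  have a: "0 < a"
    using coeff_P(1) Suc.prems(2) c(1) by (simp add: zero_less_mult_iff)
  from Suc.hyps(1)[OF deg_Q[symmetric] roots_Q] a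
  have b: "0 \<le> b" and IH: "\<And>k s. d \<le> k \<Longrightarrow> 0 \<le> s \<Longrightarrow> poly Q s \<le> a * (1 + s * b / (a * k)) ^ k"
    using deg_Q by (auto simp: a_def b_def)
  show ?case
  proof (intro conjI allI impI)
    show "0 \<le> coeff P 1"
      using coeff_P a b c by simp
    fix m and s :: real
    assume m: "degree P \<le> m" and s: "0 \<le> s"
    then obtain k where k: "m = Suc k" "d \<le> k"
      using Suc.hyps(2) by (cases m) auto
    define y where "y = s * b / (a * k)"
    have y: "0 \<le> y"
      using s a b by (simp add: y_def)
    have ky: "k * y = s * b / a"
    proof (cases "k = 0")
      case True
      then have "b = 0"
        using k deg_Q by (simp add: b_def coeff_eq_0)
      then show ?thesis
        using True by (simp add: y_def)
    qed (simp add: y_def)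
    \<comment> \<open>Split off the root \<open>-c\<close> and apply AM-GM to \<open>1 + s/c\<close> and \<open>k\<close> copies of \<open>1 + y\<close>.\<close>
    have "poly P s = (c + s) * poly Q s"
      by (simp add: P algebra_simps)
    also have "\<dots> \<le> (c + s) * (a * (1 + y) ^ k)"
      using IH[OF k(2) s] c s by (intro mult_left_mono) (auto simp: y_def)
    also have "\<dots> = (c * a) * ((1 + s / c) * (1 + y) ^ k)"
      using c by (simp add: field_simps)
    also have "\<dots> \<le> (c * a) * (1 + (s / c + k * y) / (real k + 1)) ^ (k + 1)"
      using weighted_am_gm_one_plus[of "s / c" y k] s c y a by (intro mult_left_mono) auto
    also have "s / c + k * y = s / c + s * b / a"
      by (simp only: ky)
    also have "\<dots> = s * coeff P 1 / coeff P 0"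
      unfolding coeff_P using c a by (simp add: field_simps)
    finally show "poly P s \<le> coeff P 0 * (1 + s * coeff P 1 / (coeff P 0 * m)) ^ m"
      by (simp add: coeff_P k ac_simps)
  qed
qed

lemma slope_bound_if_linear_le_power:
  fixes a b L :: real and r :: nat
  assumes r: "2 \<le> r" and a: "0 < a" and b: "0 \<le> b" and L: "0 < L"
    and le: "\<forall>s>0. s * L \<le> a * (1 + s * b / (a * r)) ^ r"
  shows "((real r - 1) / r) ^ (r - 1) * L \<le> b"
proof -
  have "b \<noteq> 0"
  proof
    assume "b = 0"
    moreover have "0 < 2 * a / L"
      using a L by simp
    ultimately have "(2 * a / L) * L \<le> a"
      using le by fastforce
    then show False
      using a L by simp
  qed
  then have b: "0 < b"
    using b by simp
  \<comment> \<open>The optimal choice \<open>s = a\<rho>/b\<close> with \<open>\<rho> = r/(r - 1)\<close> makes \<open>1 + s b/(a r) = \<rho>\<close>.\<close>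
  define \<rho> where "\<rho> = real r / (real r - 1)"
  have \<rho>: "0 < \<rho>" "(real r - 1) / r * \<rho> = 1"
    using r by (simp_all add: \<rho>_def)
  have "0 < a * \<rho> / b"
    using a b \<rho> by simp
  with le have "(a * \<rho> / b) * L \<le> a * (1 + (a * \<rho> / b) * b / (a * r)) ^ r"
    by blast
  also have "1 + (a * \<rho> / b) * b / (a * r) = \<rho>"
    using a b r by (simp add: \<rho>_def field_simps)
  also have "a * \<rho> ^ r = (a * \<rho>) * \<rho> ^ (r - 1)"
    using r by (simp add: power_eq_if)
  finally have "L \<le> b * \<rho> ^ (r - 1)"
    using a b \<rho> by (simp add: field_simps)
  then have "((real r - 1) / r) ^ (r - 1) * L \<le> ((real r - 1) / r) ^ (r - 1) * (b * \<rho> ^ (r - 1))"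
    using r by (intro mult_left_mono) auto
  also have "\<dots> = b * ((real r - 1) / r * \<rho>) ^ (r - 1)"
    by (simp add: power_mult_distrib[symmetric] mult_ac)
  finally show ?thesis
    using \<rho> by simp
qed

lemma real_rooted_coeff_1_lower_bound:
  fixes P :: "real poly"
  assumes "\<forall>z. poly (map_poly complex_of_real P) z = 0 \<longrightarrow> (\<exists>c>0. z = - of_real c)"
    and "0 < coeff P 0" "degree P \<le> r" "2 \<le> r" "0 < L"
    and "\<forall>s>0. s * L \<le> poly P s"
  shows "((real r - 1) / r) ^ (r - 1) * L \<le> coeff P 1"
proof -
  have "0 \<le> coeff P 1" and "\<forall>s>0. poly P s \<le> coeff P 0 * (1 + s * coeff P 1 / (coeff P 0 * r)) ^ r"
    using real_rooted_poly_le_power[OF assms(1,2)] assms(3) by auto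
  then show ?thesis
    using assms by (intro slope_bound_if_linear_le_power) (auto intro: order_trans)
qed

section \<open>H-stable and regular polynomials\<close>

lemma H_stable_slice_poly_roots:
  assumes H: "H_stable n p" and j: "j < n" and y: "\<forall>i\<in>{..<n} - {j}. 0 < y i"
    and z: "poly (slice_poly {..<n} n p j (\<lambda>i. complex_of_real (y i))) z = 0"
  shows "z \<in> \<real> \<and> Re z \<le> 0"
proof (rule ccontr)
  assume z_nonreal: "\<not> (z \<in> \<real> \<and> Re z \<le> 0)"
  define w where "w = csqrt z"
  have w2: "w ^ 2 = z"
    by (simp add: w_def)
  have Re_w: "0 < Re w"
  proof (rule ccontr)
    assume "\<not> 0 < Re w"
    then have "Re w = 0"
      using csqrt_principal[of z] by (auto simp: w_def)
    then have "z = of_real (- (Im w)\<^sup>2)"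
      using w2 by (simp add: complex_eq_iff power2_eq_square)
    then show False
      using z_nonreal by simp
  qed
  \<comment> \<open>Dividing by \<open>w\<close> rotates the real point \<open>y\<close> and the zero \<open>z\<close> into the open right half-plane.\<close>
  define x where "x = (\<lambda>i. 1 / w * ((\<lambda>i. complex_of_real (y i))(j := z)) i)"
  have "peval {..<n} n p x = (1 / w) ^ n * peval {..<n} n p ((\<lambda>i. complex_of_real (y i))(j := z))"
    unfolding x_def by (rule peval_scale)
  also have "peval {..<n} n p ((\<lambda>i. complex_of_real (y i))(j := z)) = 0"
    using z j by (simp add: poly_slice_poly)
  finally have "peval {..<n} n p x = 0"
    by simp
  moreover have "0 < Re (x i)" if "i < n" for i
  proof (cases "i = j")
    case True
    have "z / w = w"
      using w2 Re_w by (auto simp: power2_eq_square)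
    then show ?thesis
      using True Re_w by (simp add: x_def)
  next
    case False
    have "0 < Re w * Re w + Im w * Im w"
      using Re_w by (simp add: add_pos_nonneg)
    then show ?thesis
      using False y that Re_w by (simp add: x_def Re_divide power2_eq_square)
  qed
  ultimately show False
    using H unfolding H_stable_def by blast
qed

lemma H_stable_slice_poly_neg_roots:
  assumes H: "H_stable n p" and j: "j < n" and y: "\<forall>i\<in>{..<n} - {j}. 0 < y i"
    and c0: "coeff (slice_poly {..<n} n p j y) 0 \<noteq> 0"
  shows "\<forall>z. poly (map_poly complex_of_real (slice_poly {..<n} n p j y)) z = 0 \<longrightarrow> (\<exists>c>0. z = - of_real c)"
proof (intro allI impI)
  fix z
  assume z: "poly (map_poly complex_of_real (slice_poly {..<n} n p j y)) z = 0"
  then have "z \<in> \<real> \<and> Re z \<le> 0"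
    using H_stable_slice_poly_roots[OF H j y] by (simp add: map_poly_of_real_slice_poly)
  moreover have "z \<noteq> 0"
    using z c0 poly_map_poly_of_real[of "slice_poly {..<n} n p j y" 0] by (auto simp: poly_0_coeff_0)
  ultimately show "\<exists>c>0. z = - of_real c"
    by (intro exI[of _ "- Re z"]) (auto simp: complex_is_Real_iff complex_eq_iff)
qed

definition regular_poly :: "nat \<Rightarrow> real poly" where
  "regular_poly r = [:(real r - 1) / r, 1 / r:] ^ r"

lemma poly_regular_poly: "poly (regular_poly r) s = ((real r - 1 + s) / r) ^ r"
  by (simp add: regular_poly_def add_divide_distrib)

lemma degree_regular_poly: "degree (regular_poly r) \<le> r"
proof -
  have "degree [:(real r - 1) / r, 1 / r:] \<le> 1"
    by simp
  then have "degree [:(real r - 1) / r, 1 / r:] * r \<le> r"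
    using mult_le_mono1 by fastforce
  then show ?thesis
    unfolding regular_poly_def using degree_power_le order_trans by blast
qed

lemma coeff_0_regular_poly: "coeff (regular_poly r) 0 = ((real r - 1) / r) ^ r"
  by (metis poly_0_coeff_0 poly_regular_poly add_0_right)

lemma poly_pderiv_regular_poly:
  assumes "1 \<le> r"
  shows "poly (pderiv (regular_poly r)) s = ((real r - 1 + s) / r) ^ (r - 1)"
  using assms by (simp add: regular_poly_def pderiv_power pderiv_pCons add_divide_distrib)

lemma G_of_nat:
  assumes "1 \<le> r"
  shows "G (real r) = ((real r - 1) / r) ^ (r - 1)"
proof (cases "r = 1")
  case False
  then have "G (real r) = ((real r - 1) / r) powr real (r - 1)"
    using assms by (simp add: G_def)
  also have "\<dots> = ((real r - 1) / r) ^ (r - 1)"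
    using False assms by (intro powr_realpow) simp
  finally show ?thesis .
qed (simp add: G_def)

lemma G_of_nat_pos: "1 \<le> r \<Longrightarrow> 0 < G (real r)"
  by (cases "r = 1") (simp_all add: G_of_nat G_def)

lemma coeff_1_regular_poly:
  assumes "1 \<le> r"
  shows "coeff (regular_poly r) 1 = G (real r)"
proof -
  have "coeff (regular_poly r) 1 = poly (pderiv (regular_poly r)) 0"
    by (simp add: coeff_pderiv poly_0_coeff_0)
  then show ?thesis
    using assms by (simp add: poly_pderiv_regular_poly G_of_nat)
qed

definition r_regular :: "nat \<Rightarrow> nat \<Rightarrow> ((nat \<Rightarrow> nat) \<Rightarrow> real) \<Rightarrow> bool" where
  "r_regular n r p \<longleftrightarrow> (\<forall>t::real. \<forall>i<n. peval {..<n} n p (\<lambda>k. if k = i then 1 + t else 1) = ((real r + t) / real r) ^ r)"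

lemma slice_poly_ones_if_r_regular:
  assumes "r_regular n r p" "i < n"
  shows "slice_poly {..<n} n p i (\<lambda>_. 1) = regular_poly r"
proof -
  have "poly (slice_poly {..<n} n p i (\<lambda>_. 1)) s = poly (regular_poly r) s" for s
  proof -
    have "poly (slice_poly {..<n} n p i (\<lambda>_. 1)) s = peval {..<n} n p ((\<lambda>_. 1)(i := s))"
      using assms(2) by (simp add: poly_slice_poly)
    also have "(\<lambda>_. 1::real)(i := s) = (\<lambda>k. if k = i then 1 + (s - 1) else 1)"
      by auto
    also have "peval {..<n} n p \<dots> = ((real r + (s - 1)) / r) ^ r"
      using assms unfolding r_regular_def by blast
    also have "real r + (s - 1) = real r - 1 + s"
      by simp
    finally show ?thesis
      by (simp only: poly_regular_poly)
  qed
  then show ?thesis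
    by (intro poly_eq_poly_eq_iff[THEN iffD1] ext)
qed

lemma sum_coeffs_if_r_regular:
  assumes "r_regular n r p" "1 \<le> r" "i < n"
  shows "(\<Sum>\<alpha>\<in>monoms {..<n} n. p \<alpha>) = 1"
  using poly_slice_poly_ones[of "{..<n}" i n p 1] assms
  by (simp add: slice_poly_ones_if_r_regular poly_regular_poly)

lemma weighted_sum_coeffs_if_r_regular:
  assumes "r_regular n r p" "1 \<le> r" "i < n"
  shows "(\<Sum>\<alpha>\<in>monoms {..<n} n. p \<alpha> * \<alpha> i) = 1"
  using poly_pderiv_slice_poly_ones[of "{..<n}" i n p] assms
  by (simp add: slice_poly_ones_if_r_regular poly_pderiv_regular_poly)

lemma prod_le_peval_if_r_regular:
  assumes "hom_plus {..<n} n p" "r_regular n r p" "1 \<le> r" "0 < n" "\<forall>i<n. 0 < (x i :: real)"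
  shows "(\<Prod>i<n. x i) \<le> peval {..<n} n p x"
  using assms
  by (intro prod_le_peval_if_stochastic)
     (auto simp: sum_coeffs_if_r_regular weighted_sum_coeffs_if_r_regular)

lemma mult_prod_le_poly_slice_poly_if_r_regular:
  fixes y :: "nat \<Rightarrow> real"
  assumes hom: "hom_plus {..<n} n p" and reg: "r_regular n r p" and r: "1 \<le> r"
    and j: "j < n" and y: "\<forall>i\<in>{..<n} - {j}. 0 < y i" and s: "0 < s"
  shows "s * (\<Prod>i\<in>{..<n} - {j}. y i) \<le> poly (slice_poly {..<n} n p j y) s"
proof -
  have "(\<Prod>i\<in>{..<n} - {j}. (y(j := s)) i) = (\<Prod>i\<in>{..<n} - {j}. y i)"
    by (rule prod.cong) auto
  then have "(\<Prod>i<n. (y(j := s)) i) = s * (\<Prod>i\<in>{..<n} - {j}. y i)"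
    using j by (simp add: prod.remove[of "{..<n}" j])
  moreover have "(\<Prod>i<n. (y(j := s)) i) \<le> peval {..<n} n p (y(j := s))"
    using y s j by (intro prod_le_peval_if_r_regular[OF hom reg r]) auto
  ultimately show ?thesis
    using j by (simp add: poly_slice_poly)
qed

lemma coeff_slice_poly_eq_0_iff_regular_poly:
  fixes y :: "nat \<Rightarrow> real"
  assumes hom: "hom_plus {..<n} n p" and reg: "r_regular n r p"
    and j: "j < n" and y: "\<forall>i\<in>{..<n} - {j}. 0 < y i"
  shows "coeff (slice_poly {..<n} n p j y) m = 0 \<longleftrightarrow> coeff (regular_poly r) m = 0"
proof -
  have "\<forall>\<alpha>. 0 \<le> p \<alpha>"
    using hom by (simp add: hom_plus_def)
  then show ?thesis
    using coeff_slice_poly_eq_0_iff[of "{..<n}" p j y n m] y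
      coeff_slice_poly_eq_0_iff[of "{..<n}" p j "\<lambda>_. 1" n m] slice_poly_ones_if_r_regular[OF reg j]
    by simp
qed

lemma G_mult_prod_le_coeff_1_slice_poly:
  assumes r: "1 \<le> r" and hom: "hom_plus {..<n} n p" and stable: "H_stable n p"
    and reg: "r_regular n r p" and j: "j < n" and y: "\<forall>i\<in>{..<n} - {j}. 0 < y i"
  shows "G (real r) * (\<Prod>i\<in>{..<n} - {j}. y i) \<le> coeff (slice_poly {..<n} n p j y) 1"
proof -
  define P where "P = slice_poly {..<n} n p j y"
  define L where "L = (\<Prod>i\<in>{..<n} - {j}. y i)"
  have L: "0 < L"
    unfolding L_def using y by (intro prod_pos) auto
  have lower: "\<forall>s>0. s * L \<le> poly P s"
    unfolding P_def L_def using mult_prod_le_poly_slice_poly_if_r_regular[OF hom reg r j y] by blast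
  note coeff_eq_0_iff = coeff_slice_poly_eq_0_iff_regular_poly[OF hom reg j y, folded P_def]
  have deg: "degree P \<le> r"
    using degree_regular_poly[of r] coeff_eq_0_iff by (intro degree_le) (auto simp: coeff_eq_0)
  show ?thesis
  proof (cases "r = 1")
    case True
    then have "coeff P 0 = 0"
      using coeff_eq_0_iff coeff_0_regular_poly by simp
    have "poly P 1 = (\<Sum>i\<le>degree P. coeff P i)"
      by (simp add: poly_altdef)
    also have "\<dots> = (\<Sum>i\<le>1. coeff P i)"
      using deg True by (intro sum.mono_neutral_left) (auto simp: coeff_eq_0)
    also have "\<dots> = coeff P 1"
      using \<open>coeff P 0 = 0\<close> by simp
    finally have "L \<le> coeff P 1"
      using lower by (metis mult_1 zero_less_one)
    then show ?thesis
      using True by (simp add: G_def L_def P_def)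
  next
    case False
    then have r2: "2 \<le> r"
      using r by simp
    have "coeff P 0 \<noteq> 0"
      using coeff_eq_0_iff coeff_0_regular_poly r2 by simp
    moreover have "0 \<le> coeff P 0"
      using hom y less_imp_le unfolding P_def hom_plus_def by (intro coeff_slice_poly_nonneg) blast+
    ultimately have P0: "0 < coeff P 0"
      by simp
    have "\<forall>z. poly (map_poly complex_of_real P) z = 0 \<longrightarrow> (\<exists>c>0. z = - of_real c)"
      unfolding P_def using H_stable_slice_poly_neg_roots[OF stable j y] P0 by (simp add: P_def)
    from real_rooted_coeff_1_lower_bound[OF this P0 deg r2 L lower] show ?thesis
      using r by (simp add: G_of_nat L_def P_def)
  qed
qed

theorem proposition7p3:
  fixes n r :: nat and p :: "(nat \<Rightarrow> nat) \<Rightarrow> real"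
  assumes "r \<ge> 1"
    and "hom_plus {..<n} n p"
    and "H_stable n p"
    and "\<forall>t::real. \<forall>i<n. peval {..<n} n p (\<lambda>k. if k = i then 1 + t else 1)
            = ((real r + t) / real r) ^ r"
  shows "\<forall>j<n. doubly_stochastic ({..<n} - {j})
                 (\<lambda>\<alpha>. subst_zero j (pdiff j p) \<alpha> / G (real r))"
proof (intro allI impI)
  fix j
  assume j: "j < n"
  define V where "V = {..<n} - {j}"
  define q where "q = subst_zero j (pdiff j p)"
  have reg: "r_regular n r p"
    using assms(4) unfolding r_regular_def .
  have n: "Suc (n - 1) = n" and card: "card V = n - 1"
    using j by (simp_all add: V_def)
  have hom: "hom_plus V (card V) q"
    using hom_plus_subst_zero_pdiff[of "{..<n}" j "n - 1" p, unfolded n] assms(2) j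
    by (simp add: V_def q_def card)
  have q_eq: "peval V (card V) q y = coeff (slice_poly {..<n} n p j y) 1" for y :: "nat \<Rightarrow> real"
    using peval_subst_zero_pdiff[of "{..<n}" j "n - 1" p y, unfolded n] j
    by (simp add: V_def q_def card)
  have "G (real r) * (\<Prod>i\<in>V. x i) \<le> peval V (card V) q x" if "\<forall>i\<in>V. 0 < x i" for x
    unfolding q_eq using G_mult_prod_le_coeff_1_slice_poly[OF assms(1,2,3) reg j] that
    by (simp only: V_def)
  moreover have "peval V (card V) q (\<lambda>_. 1) = G (real r)"
    unfolding q_eq slice_poly_ones_if_r_regular[OF reg j] using coeff_1_regular_poly[OF assms(1)] .
  ultimately have "doubly_stochastic V (\<lambda>\<alpha>. q \<alpha> / G (real r))"
    using G_of_nat_pos[OF assms(1)] by (intro doubly_stochastic_div_if_capacity_attained hom) (auto simp: V_def)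
  then show "doubly_stochastic ({..<n} - {j}) (\<lambda>\<alpha>. subst_zero j (pdiff j p) \<alpha> / G (real r))"
    unfolding V_def q_def .
qed

end
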